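(* Let $n\ge0$, $\alpha\ge1$ be integers, $N=2^{n+1}$, $c=2^\alpha+1$, and consider the 1D-Tree and the $c$-DAG over the uniform dataset $\{0,\dots,N-1\}$ (described in the context). Let $s$ be a real number with $1<s\le N$ and $\kappa=\lfloor\log_2(N/s)\rfloor$, and assume $2^{n-\kappa}<s\le\frac{c-2}{c-1}2^{n-\kappa+1}$. Then for $Q\sim\mathcal{I}_s$, \[ \mathbb{P}_{\mathcal{I}_s}\bigl(\mathrm{level}_{c\text{-DAG}}(Q)-\mathrm{level}_{\mathrm{Tree}}(Q)=k\bigr)= \begin{cases} \dfrac{2^{\kappa}(2^{n-\kappa+1}-s)}{N-s}=\dfrac{N-2^\kappa s}{N-s}, & k=0,\\[2mm] \dfrac{2^{\kappa-k}s}{N-s}, & k\in\{1,\dots,\kappa\}, \end{cases} \] and this probability is $0$ for every other integer $k$.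
   Context: The 1D-Tree over $\mathcal{D}=\{0,\dots,N-1\}\subset[0,N)$ has levels $\ell=0,\dots,n+1$; its level-$\ell$ nodes are the intervals $[m2^{n-\ell+1},(m+1)2^{n-\ell+1})$, $m=0,\dots,2^\ell-1$. The $c$-DAG over $\mathcal{D}$ has levels $\ell=0,\dots,n+1$; with $u_\ell=2^{n-\ell+1}/(c-1)$, its level-$\ell$ nodes are the intervals $[mu_\ell,\,mu_\ell+2^{n-\ell+1})$, $m=0,1,\dots,(c-1)2^\ell-(c-1)$ (a node $[a,a+L)$ has children $[a+jL/(2(c-1)),\,a+jL/(2(c-1))+L/2)$, $j=0,\dots,c-1$). SRC-search returns a node of the deepest level whose interval contains $Q$; $\mathrm{level}_{\mathrm{Tree}}(Q)$ (resp. $\mathrm{level}_{c\text{-DAG}}(Q)$) is the largest $\ell$ such that some level-$\ell$ node of the respective structure contains $Q$. $\mathcal{I}_s$ is the distribution of $Q=[x,x+s)$ with $x$ uniform on $[0,N-s]$. *)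

theory Defs
  imports "HOL-Probability.Probability"
begin

definition tree_nodes :: "nat \<Rightarrow> nat \<Rightarrow> real set set" where
  "tree_nodes n l = (\<lambda>m. {real m * 2^(n+1-l) ..< (real m + 1) * 2^(n+1-l)}) ` {0..<2^l}"

definition dag_nodes :: "nat \<Rightarrow> nat \<Rightarrow> nat \<Rightarrow> real set set" where
  "dag_nodes c n l = (\<lambda>m. {real m * (2^(n+1-l) / (real c - 1)) ..<
        real m * (2^(n+1-l) / (real c - 1)) + 2^(n+1-l)}) ` {0..(c-1)*2^l-(c-1)}"

definition level_of :: "(nat \<Rightarrow> real set set) \<Rightarrow> nat \<Rightarrow> real set \<Rightarrow> nat" where
  "level_of nodes n Q = Max {l. l \<le> n+1 \<and> (\<exists>I\<in>nodes l. Q \<subseteq> I)}"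

definition level_Tree :: "nat \<Rightarrow> real set \<Rightarrow> nat" where
  "level_Tree n Q = level_of (tree_nodes n) n Q"

definition level_DAG :: "nat \<Rightarrow> nat \<Rightarrow> real set \<Rightarrow> nat" where
  "level_DAG c n Q = level_of (dag_nodes c n) n Q"

text \<open>Distribution of the left endpoint x of Q = [x, x+s): uniform on [0, N-s].\<close>
definition I_dist :: "nat \<Rightarrow> real \<Rightarrow> real measure" where
  "I_dist N s = uniform_measure lborel {0..real N - s}"

end

theory Submission
  imports Defs
begin

(* For a level l, let E_l (fitting_starts) be the set of left endpoints x such that [x, x+s)
   fits inside some level-l node. For the tree, E_l is a union of 2^l disjoint intervals of
   length 2^(n+1-l) - s, so it has measure N - 2^l s; the E_l decrease in l and vanish beyond
   level \<kappa>, since 2^(n-\<kappa>) < s. In the c-DAG, consecutive level-\<kappa> nodes are shifted by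
   u = 2^(n+1-\<kappa>) / 2^\<alpha>, and the upper bound on s says exactly u \<le> 2^(n+1-\<kappa>) - s, so the
   admissible windows of these nodes cover [0, N-s]: the DAG level is \<kappa> everywhere.
   Hence the level difference is \<kappa> - j exactly on E_j - E_(j+1), of measure 2^j s for j < \<kappa>
   and N - 2^\<kappa> s for j = \<kappa>. *)

definition fitting_starts :: "(nat \<Rightarrow> real set set) \<Rightarrow> real \<Rightarrow> nat \<Rightarrow> real set" where
  "fitting_starts nodes s l = {x. \<exists>I\<in>nodes l. {x..<x+s} \<subseteq> I}"

lemma level_of_atLeastLessThan:
  "level_of nodes n {x..<x+s} = Max {l. l \<le> n+1 \<and> x \<in> fitting_starts nodes s l}"
  by (simp add: level_of_def fitting_starts_def)

lemma measurable_level_of: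
  assumes "\<And>l. fitting_starts nodes s l \<in> sets borel"
  shows "(\<lambda>x. level_of nodes n {x..<x+s}) \<in> borel \<rightarrow>\<^sub>M count_space UNIV"
  unfolding level_of_atLeastLessThan using assms by measurable

lemma fitting_starts_tree_nodes:
  fixes s :: real
  assumes "0 < s"
  shows "fitting_starts (tree_nodes n) s l =
    (\<Union>m<2^l. {real m * 2^(n+1-l) .. (real m + 1) * 2^(n+1-l) - s})"
  using assms by (auto simp: fitting_starts_def tree_nodes_def atLeast0LessThan)

lemma fitting_starts_dag_nodes:
  fixes s :: real
  assumes "0 < s"
  shows "fitting_starts (dag_nodes c n) s l =
    (\<Union>m\<le>(c-1)*2^l-(c-1). {real m * (2^(n+1-l) / (real c - 1)) ..
        real m * (2^(n+1-l) / (real c - 1)) + 2^(n+1-l) - s})"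
  using assms by (auto simp: fitting_starts_def dag_nodes_def atLeast0AtMost)

lemma sets_fitting_starts_tree_nodes:
  fixes s :: real
  assumes "0 < s"
  shows "fitting_starts (tree_nodes n) s l \<in> sets borel"
  using assms by (auto simp: fitting_starts_tree_nodes)

lemma sets_fitting_starts_dag_nodes:
  fixes s :: real
  assumes "0 < s"
  shows "fitting_starts (dag_nodes c n) s l \<in> sets borel"
  using assms by (auto simp: fitting_starts_dag_nodes)

lemma measure_UN_grid:
  fixes L s :: real
  assumes "0 < s" "s \<le> L"
  shows "measure lborel (\<Union>m<j. {real m * L .. (real m + 1) * L - s}) = real j * (L - s)"
proof -
  have disj: "{real m * L .. (real m + 1) * L - s} \<inter> {real m' * L .. (real m' + 1) * L - s} = {}"
    if "m < m'" for m m' :: nat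
  proof -
    have "(real m + 1) * L \<le> real m' * L"
      using that assms by (intro mult_right_mono) auto
    then show ?thesis using assms(1) by (smt (verit) atLeastAtMost_iff disjoint_iff)
  qed
  have "disjoint_family_on (\<lambda>m. {real m * L .. (real m + 1) * L - s}) {..<j}"
    unfolding disjoint_family_on_def by (metis disj Int_commute linorder_neqE_nat)
  then have "measure lborel (\<Union>m<j. {real m * L .. (real m + 1) * L - s})
      = (\<Sum>m<j. measure lborel {real m * L .. (real m + 1) * L - s})"
    by (intro measure_finite_Union) (auto simp: emeasure_lborel_Icc_eq)
  also have "\<dots> = (\<Sum>m<j. L - s)"
    using assms by (intro sum.cong) (auto simp: algebra_simps)
  finally show ?thesis by simp
qed

lemma UN_grid_refine:
  fixes L s :: real
  assumes "0 \<le> L"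
  shows "(\<Union>m<2*j. {real m * L .. (real m + 1) * L - s})
    \<subseteq> (\<Union>m<j. {real m * (2*L) .. (real m + 1) * (2*L) - s})"
proof
  fix x assume "x \<in> (\<Union>m<2*j. {real m * L .. (real m + 1) * L - s})"
  then obtain m where m: "m < 2*j" "real m * L \<le> x" "x \<le> (real m + 1) * L - s" by auto
  have "real (m div 2 * 2) \<le> real m" "real (m + 1) \<le> real ((m div 2 + 1) * 2)"
    by (simp_all only: of_nat_le_iff) presburger+
  then have "real (m div 2) * 2 \<le> real m" "real m + 1 \<le> (real (m div 2) + 1) * 2"
    by simp_all
  then have "real (m div 2) * (2*L) \<le> real m * L" "(real m + 1) * L \<le> (real (m div 2) + 1) * (2*L)"
    using assms mult_right_mono by (metis mult.assoc)+
  with m show "x \<in> (\<Union>m<j. {real m * (2*L) .. (real m + 1) * (2*L) - s})"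
    by (intro UN_I[of "m div 2"]) auto
qed

lemma atLeastAtMost_subset_UN_shifts:
  fixes u w :: real
  assumes "0 < u" "u \<le> w"
  shows "{0 .. real M * u + w} \<subseteq> (\<Union>m\<le>M. {real m * u .. real m * u + w})"
proof
  fix x assume x: "x \<in> {0 .. real M * u + w}"
  show "x \<in> (\<Union>m\<le>M. {real m * u .. real m * u + w})"
  proof (cases "real M * u \<le> x")
    case True
    with x show ?thesis by (intro UN_I[of M]) auto
  next
    case False
    define m where "m = nat \<lfloor>x / u\<rfloor>"
    have "real m = of_int \<lfloor>x / u\<rfloor>" using x assms by (simp add: m_def)
    then have "real m * u \<le> x" "x < real m * u + u"
      using floor_divide_lower[of u x] floor_divide_upper[of u x] assms
      by (simp_all add: algebra_simps)
    moreover from this False have "real m * u < real M * u" by linarith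
    then have "m \<le> M" using assms(1) by simp
    ultimately show ?thesis using assms by (intro UN_I[of m]) auto
  qed
qed

lemma Max_levels_eqI:
  fixes E :: "nat \<Rightarrow> 'a set"
  assumes "j \<le> M" "x \<in> E j" "\<And>l. j < l \<Longrightarrow> l \<le> M \<Longrightarrow> x \<notin> E l"
  shows "Max {l. l \<le> M \<and> x \<in> E l} = j"
proof (rule Max_eqI)
  show "finite {l. l \<le> M \<and> x \<in> E l}"
    by (rule finite_subset[of _ "{..M}"]) auto
  show "y \<le> j" if "y \<in> {l. l \<le> M \<and> x \<in> E l}" for y
    using assms(3)[of y] that by (cases "j < y") auto
qed (use assms in auto)

lemma Max_levels_le:
  fixes E :: "nat \<Rightarrow> 'a set"
  assumes "x \<in> E 0" "\<And>l. K < l \<Longrightarrow> x \<notin> E l"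
  shows "Max {l. l \<le> M \<and> x \<in> E l} \<le> K"
proof -
  have "finite {l. l \<le> M \<and> x \<in> E l}"
    by (rule finite_subset[of _ "{..M}"]) auto
  with assms show ?thesis by (subst Max_le_iff) (auto simp: not_less[symmetric])
qed

lemma Max_levels_eq_iff:
  fixes E :: "nat \<Rightarrow> 'a set"
  assumes "decseq E" "x \<in> E 0" "j < M"
  shows "Max {l. l \<le> M \<and> x \<in> E l} = j \<longleftrightarrow> x \<in> E j - E (Suc j)"
proof
  assume max: "Max {l. l \<le> M \<and> x \<in> E l} = j"
  have "j \<in> {l. l \<le> M \<and> x \<in> E l}"
    unfolding max[symmetric] using assms(2) by (intro Max_in) auto
  moreover have "x \<notin> E (Suc j)"
    using Max_ge[of "{l. l \<le> M \<and> x \<in> E l}" "Suc j"] max assms(3) by auto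
  ultimately show "x \<in> E j - E (Suc j)" by simp
next
  assume "x \<in> E j - E (Suc j)"
  moreover have "E l \<subseteq> E (Suc j)" if "j < l" for l
    using assms(1) that by (simp add: decseq_def)
  ultimately show "Max {l. l \<le> M \<and> x \<in> E l} = j"
    using assms(3) by (intro Max_levels_eqI) auto
qed

lemma fitting_starts_tree_nodes_0:
  fixes s :: real
  assumes "0 < s"
  shows "fitting_starts (tree_nodes n) s 0 = {0 .. 2^(n+1) - s}"
  using assms by (simp add: fitting_starts_tree_nodes lessThan_Suc)

lemma fitting_starts_tree_nodes_eq_empty:
  fixes s :: real
  assumes "2^(n-K) < s" "K < l"
  shows "fitting_starts (tree_nodes n) s l = {}"
proof -
  have "(2::real)^(n+1-l) \<le> 2^(n-K)" using assms(2) by (intro power_increasing) auto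
  moreover have "(0::real) < 2^(n+1-l)" by simp
  ultimately have "0 < s" "2^(n+1-l) < s" using assms(1) by linarith+
  then show ?thesis by (auto simp: fitting_starts_tree_nodes algebra_simps)
qed

lemma fitting_starts_dag_nodes_eq_empty:
  fixes s :: real
  assumes "2^(n-K) < s" "K < l"
  shows "fitting_starts (dag_nodes c n) s l = {}"
proof -
  have "(2::real)^(n+1-l) \<le> 2^(n-K)" using assms(2) by (intro power_increasing) auto
  moreover have "(0::real) < 2^(n+1-l)" by simp
  ultimately have "0 < s" "2^(n+1-l) < s" using assms(1) by linarith+
  then show ?thesis by (auto simp: fitting_starts_dag_nodes)
qed

lemma decseq_fitting_starts_tree_nodes:
  fixes s :: real
  assumes "1 < s"
  shows "decseq (fitting_starts (tree_nodes n) s)"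
proof (rule decseq_SucI)
  fix l
  show "fitting_starts (tree_nodes n) s (Suc l) \<subseteq> fitting_starts (tree_nodes n) s l"
  proof (cases "l \<le> n")
    case True
    then have "(2::real)^(n+1-l) = 2 * 2^(n+1-Suc l)"
      by (simp flip: power_Suc add: Suc_diff_le)
    then show ?thesis
      using UN_grid_refine[where L = "2^(n+1-Suc l)" and j = "2^l"] assms
      by (simp add: fitting_starts_tree_nodes)
  next
    case False
    then show ?thesis using assms by (simp add: fitting_starts_tree_nodes_eq_empty[where K = n])
  qed
qed

lemma measure_fitting_starts_tree_nodes:
  fixes s :: real
  assumes "0 < s" "s \<le> 2^(n+1-l)" "l \<le> n+1"
  shows "measure lborel (fitting_starts (tree_nodes n) s l) = 2^(n+1) - 2^l * s"
proof -
  have "measure lborel (fitting_starts (tree_nodes n) s l) = 2^l * (2^(n+1-l) - s)"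
    using measure_UN_grid[OF assms(1,2), where j = "2^l"] assms(1) by (simp add: fitting_starts_tree_nodes)
  also have "\<dots> = 2^(n+1) - 2^l * s"
    using assms(3) by (simp add: algebra_simps flip: power_add)
  finally show ?thesis .
qed

lemma level_Tree_eq_iff:
  fixes s :: real
  assumes "1 < s" "x \<in> {0 .. 2^(n+1) - s}" "j \<le> n"
  shows "level_Tree n {x..<x+s} = j \<longleftrightarrow>
    x \<in> fitting_starts (tree_nodes n) s j - fitting_starts (tree_nodes n) s (Suc j)"
  unfolding level_Tree_def level_of_atLeastLessThan
  using assms by (intro Max_levels_eq_iff decseq_fitting_starts_tree_nodes)
    (auto simp: fitting_starts_tree_nodes_0)

lemma measure_level_Tree_eq:
  fixes s :: real
  assumes "K \<le> n" "2^(n-K) < s" "s \<le> 2^(n+1-K)" "j \<le> K"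
  shows "measure lborel {x \<in> {0 .. 2^(n+1) - s}. level_Tree n {x..<x+s} = j}
    = (if j = K then 2^(n+1) - 2^K * s else 2^j * s)"
proof -
  let ?E = "fitting_starts (tree_nodes n) s"
  have "(1::real) \<le> 2^(n-K)" by simp
  with assms(2) have s: "1 < s" by linarith
  have "decseq ?E" using s by (rule decseq_fitting_starts_tree_nodes)
  then have "?E j \<subseteq> ?E 0" "?E (Suc j) \<subseteq> ?E j" by (simp_all add: decseqD)
  then have "?E j \<subseteq> {0 .. 2^(n+1) - s}" "?E (Suc j) \<subseteq> ?E j"
    using s by (simp_all add: fitting_starts_tree_nodes_0)
  moreover have "{x \<in> {0 .. 2^(n+1) - s}. level_Tree n {x..<x+s} = j} = ?E j - ?E (Suc j)"
    using calculation level_Tree_eq_iff[OF s _ order.trans[OF assms(4,1)]] by auto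
  moreover have "emeasure lborel (?E j) \<noteq> \<infinity>"
    using emeasure_bounded_finite[OF bounded_subset[OF bounded_closed_interval calculation(1)]]
    by simp
  ultimately have "measure lborel {x \<in> {0 .. 2^(n+1) - s}. level_Tree n {x..<x+s} = j}
      = measure lborel (?E j) - measure lborel (?E (Suc j))"
    using s by (simp add: measure_Diff sets_fitting_starts_tree_nodes)
  moreover have "measure lborel (?E l) = 2^(n+1) - 2^l * s" if "l \<le> K" for l
  proof (rule measure_fitting_starts_tree_nodes)
    have "(2::real)^(n+1-K) \<le> 2^(n+1-l)" using that by (intro power_increasing) auto
    then show "s \<le> 2^(n+1-l)" using assms(3) by linarith
  qed (use s that assms(1) in auto)
  moreover have "?E (Suc K) = {}"
    using assms(2) by (rule fitting_starts_tree_nodes_eq_empty) simp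
  ultimately show ?thesis
    using assms(4) by (cases "j = K") (auto simp: algebra_simps)
qed

lemma level_DAG_eq:
  fixes s :: real
  assumes "K \<le> n" "2^(n-K) < s" "s \<le> (1 - 1/2^\<alpha>) * 2^(n+1-K)" "x \<in> {0 .. 2^(n+1) - s}"
  shows "level_DAG (2^\<alpha>+1) n {x..<x+s} = K"
proof -
  let ?E = "fitting_starts (dag_nodes (2^\<alpha>+1) n) s"
  define L :: real where "L = 2^(n+1-K)"
  define u where "u = L / 2^\<alpha>"
  define M :: nat where "M = 2^\<alpha> * 2^K - 2^\<alpha>"
  have "(1::real) \<le> 2^(n-K)" by simp
  with assms(2) have s: "0 < s" by linarith
  have "(2::nat)^\<alpha> \<le> 2^\<alpha> * 2^K" by simp
  then have "real M * u = 2^K * L - L"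
    by (simp add: M_def u_def of_nat_diff field_simps)
  also have "2^K * L = 2^(n+1)"
    using assms(1) by (simp add: L_def flip: power_add)
  finally have "{0 .. 2^(n+1) - s} = {0 .. real M * u + (L - s)}" by simp
  moreover have "?E K = (\<Union>m\<le>M. {real m * u .. real m * u + (L - s)})"
    using s by (simp add: fitting_starts_dag_nodes L_def u_def M_def add_diff_eq)
  moreover have "0 < u" by (simp add: u_def L_def)
  moreover have "u \<le> L - s"
    using assms(3) by (simp add: u_def L_def left_diff_distrib)
  ultimately have "{0 .. 2^(n+1) - s} \<subseteq> ?E K"
    using atLeastAtMost_subset_UN_shifts[of u "L - s" M] by (simp only:)
  with assms(4) have "x \<in> ?E K" by blast
  then show ?thesis
    unfolding level_DAG_def level_of_atLeastLessThan
    using assms(1,2) by (intro Max_levels_eqI) (auto simp: fitting_starts_dag_nodes_eq_empty)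
qed

lemma measure_I_dist:
  assumes "s < real N" "B \<in> sets borel"
  shows "measure (I_dist N s) B = measure lborel ({0 .. real N - s} \<inter> B) / (real N - s)"
  using assms unfolding I_dist_def by (subst measure_uniform_measure) auto

lemma sets_level_difference:
  fixes s :: real
  assumes "0 < s"
  shows "{x \<in> space borel.
    int (level_DAG c n {x..<x+s}) - int (level_Tree n {x..<x+s}) = k} \<in> sets borel"
proof -
  have [measurable]: "(\<lambda>x. level_Tree n {x..<x+s}) \<in> borel \<rightarrow>\<^sub>M count_space UNIV"
    unfolding level_Tree_def using assms by (intro measurable_level_of sets_fitting_starts_tree_nodes)
  have [measurable]: "(\<lambda>x. level_DAG c n {x..<x+s}) \<in> borel \<rightarrow>\<^sub>M count_space UNIV"
    unfolding level_DAG_def using assms by (intro measurable_level_of sets_fitting_starts_dag_nodes)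
  show ?thesis by measurable
qed

lemma measure_level_difference:
  fixes s :: real and k :: int
  assumes "K \<le> n" "2^(n-K) < s" "s \<le> (1 - 1/2^\<alpha>) * 2^(n+1-K)"
  shows "measure (I_dist (2^(n+1)) s)
           {x \<in> space (I_dist (2^(n+1)) s).
              int (level_DAG (2^\<alpha>+1) n {x..<x+s}) - int (level_Tree n {x..<x+s}) = k}
    = (if k = 0 then 2^(n+1) - 2^K * s else if 1 \<le> k \<and> k \<le> K then 2^(K - nat k) * s else 0)
      / (2^(n+1) - s)"
  (is "measure _ ?B = _")
proof -
  define A where "A = {0 .. (2::real)^(n+1) - s}"
  have "(1::real) \<le> 2^(n-K)" by simp
  with assms(2) have s: "1 < s" by linarith
  have "s \<le> 2^(n+1-K) - 2^(n+1-K) / 2^\<alpha>"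
    using assms(3) by (simp add: left_diff_distrib)
  moreover have "0 < (2::real)^(n+1-K) / 2^\<alpha>" by simp
  ultimately have sL: "s < 2^(n+1-K)" by linarith
  moreover have "(2::real)^(n+1-K) \<le> 2^(n+1)" by (intro power_increasing) auto
  ultimately have sN: "s < 2^(n+1)" by linarith
  have "?B \<in> sets borel"
    using sets_level_difference[of s "2^\<alpha>+1" n k] s by (simp add: I_dist_def)
  then have prob: "measure (I_dist (2^(n+1)) s) ?B = measure lborel (A \<inter> ?B) / (2^(n+1) - s)"
    using sN by (simp add: measure_I_dist A_def)
  have DAG: "level_DAG (2^\<alpha>+1) n {x..<x+s} = K" if "x \<in> A" for x
    using level_DAG_eq[OF assms] that by (simp add: A_def)
  have Tree: "level_Tree n {x..<x+s} \<le> K" if "x \<in> A" for x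
    unfolding level_Tree_def level_of_atLeastLessThan
    using s assms(2) that
    by (intro Max_levels_le) (auto simp: A_def fitting_starts_tree_nodes_0 fitting_starts_tree_nodes_eq_empty)
  show ?thesis
  proof (cases "0 \<le> k \<and> k \<le> K")
    case True
    have "int K - int t = k \<longleftrightarrow> t = K - nat k" if "t \<le> K" for t
      using that True by linarith
    then have "A \<inter> ?B = {x \<in> A. level_Tree n {x..<x+s} = K - nat k}"
      using DAG Tree by (auto simp: I_dist_def)
    moreover have "K - nat k = K \<longleftrightarrow> k = 0" using True by auto
    ultimately show ?thesis
      using measure_level_Tree_eq[OF assms(1,2) less_imp_le[OF sL], of "K - nat k"] True prob
      by (auto simp: A_def)
  next
    case False
    then have "A \<inter> ?B = {}" using DAG Tree by (auto simp: I_dist_def)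
    with False show ?thesis using prob by auto
  qed
qed

lemma exponent_nonneg_le_of_powr_bounds:
  fixes s :: real and \<kappa> :: int
  assumes "1 < s" "s \<le> 2^(n+1)" "2 powr (real n - \<kappa>) < s" "s \<le> 2 powr (real n - \<kappa> + 1)"
  obtains K where "\<kappa> = int K" "K \<le> n"
proof -
  have "2^(n+1) = 2 powr real (n+1)" by (subst powr_realpow) simp_all
  with assms(2,3) have "2 powr (real n - \<kappa>) < 2 powr real (n+1)" by linarith
  then have "0 \<le> \<kappa>" by simp
  moreover from assms(1,4) have "2 powr 0 < 2 powr (real n - \<kappa> + 1)" by simp
  then have "real_of_int \<kappa> < real_of_int (int n + 1)"
    by (subst (asm) powr_less_cancel_iff) simp_all
  then have "\<kappa> \<le> n" by linarith
  ultimately show ?thesis using that by (metis nonneg_int_cases of_nat_le_iff)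
qed

theorem lemma4:
  fixes n \<alpha> :: nat and s :: real and \<kappa> k :: int
  assumes "\<alpha> \<ge> 1"
    and "1 < s" and "s \<le> real (2^(n+1))"
    and "\<kappa> = \<lfloor>log 2 (real (2^(n+1)) / s)\<rfloor>"
    and "2 powr (real n - \<kappa>) < s"
    and "s \<le> (real (2^\<alpha>+1) - 2) / (real (2^\<alpha>+1) - 1) * 2 powr (real n - \<kappa> + 1)"
  shows "measure (I_dist (2^(n+1)) s)
           {x \<in> space (I_dist (2^(n+1)) s).
              int (level_DAG (2^\<alpha>+1) n {x..<x+s}) - int (level_Tree n {x..<x+s}) = k}
         = (if k = 0 then (real (2^(n+1)) - 2 powr \<kappa> * s) / (real (2^(n+1)) - s)
            else if 1 \<le> k \<and> k \<le> \<kappa> then 2 powr (\<kappa> - k) * s / (real (2^(n+1)) - s)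
            else 0)"
proof -
  have upper: "s \<le> (1 - 1/2^\<alpha>) * 2 powr (real n - \<kappa> + 1)"
    using assms(6) by (simp add: field_simps)
  have "0 \<le> 1 - 1/(2::real)^\<alpha>" by simp
  then have "(1 - 1/2^\<alpha>) * 2 powr (real n - \<kappa> + 1) \<le> 2 powr (real n - \<kappa> + 1)"
    by (intro mult_left_le_one_le) simp_all
  with upper have "s \<le> 2 powr (real n - \<kappa> + 1)" by linarith
  moreover have "s \<le> 2^(n+1)" using assms(3) by simp
  ultimately obtain K where K: "\<kappa> = int K" "K \<le> n"
    using assms(2,5) by (elim exponent_nonneg_le_of_powr_bounds)
  then have "real n - \<kappa> = real (n - K)" "real n - \<kappa> + 1 = real (n + 1 - K)" by auto
  then have "2 powr (real n - \<kappa>) = 2^(n-K)" "2 powr (real n - \<kappa> + 1) = 2^(n+1-K)"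
    by (simp_all only: powr_realpow zero_less_numeral)
  with K(2) assms(5) upper have distribution: "measure (I_dist (2^(n+1)) s)
           {x \<in> space (I_dist (2^(n+1)) s).
              int (level_DAG (2^\<alpha>+1) n {x..<x+s}) - int (level_Tree n {x..<x+s}) = k}
    = (if k = 0 then 2^(n+1) - 2^K * s else if 1 \<le> k \<and> k \<le> K then 2^(K - nat k) * s else 0)
      / (2^(n+1) - s)"
    by (intro measure_level_difference) simp_all
  have "2 powr \<kappa> = 2^K" using K by (simp add: powr_realpow)
  moreover have "2 powr (\<kappa> - k) = 2^(K - nat k)" if "1 \<le> k" "k \<le> \<kappa>"
    using that K by (simp add: powr_realpow of_nat_diff flip: powr_realpow)
  ultimately show ?thesis using distribution K by auto
qed

end
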